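(* Let $N$ be a positive integer and let $(\mathbf{l}^N_n)_{n\in\mathbb{N}^+}$ be a sequence of numbers in $[-1,1]$ such that for some fixed sign $\varepsilon\in\{1,-1\}$ we have $\mathbf{l}^N_n=\varepsilon(-1)^n$ for all $n\ge N$. Let $\mathbb{A}=(a_n)_{n\in\mathbb{N}^+}$ be a sequence of integers with $2\le a_1<a_2<\cdots<a_n<a_{n+1}<\cdots$. Then the Euler product $$\zeta^{\mathbf{l}^N_n}_{\mathbb{A}}(s)=\prod_{n=1}^{\infty}\frac{1}{1-\mathbf{l}^N_n a_n^{-s}}$$ has an analytic continuation to the half-plane $\Re(s)>1/2$ which has no zeros and no singularities in this half-plane.
   Context: For $a>0$, $a^{-s}=e^{-s\ln a}$. The product converges for $\Re(s)>1$, where it defines $\zeta^{\mathbf{l}^N_n}_{\mathbb{A}}$. *)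

theory Defs
  imports "HOL-Analysis.Analysis"
begin

end

theory Submission
  imports Defs "HOL-Complex_Analysis.Cauchy_Integral_Formula"
begin

text \<open>
  With b(n) = a(n+1) and c(n) = l(n+1), group the series of -Ln (1 - c(n) b(n) powr -s) in
  consecutive pairs. Since Ln (1 - x) = -x + O(|x|^2), the quadratic remainders are
  O(b(n) powr -2\<sigma>), which is summable for \<sigma> > 1/2. Eventually c(2k+1) = -c(2k), so the linear
  terms of a pair combine to c(2k) (b(2k) powr -s - b(2k+1) powr -s), whose norm is at most
  |s|/\<sigma> (b(2k) powr -\<sigma> - b(2k+1) powr -\<sigma>) by integrating the derivative of t powr -s; these
  bounds telescope. So the paired series converges locally uniformly on Re s > 1/2, and its
  exponential is a zero-free holomorphic continuation of the Euler product.
\<close>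

lemma norm_powr_diff_le:
  fixes s :: complex and u v \<sigma> :: real
  assumes "1 \<le> u" "u \<le> v" "0 < \<sigma>" "\<sigma> \<le> Re s"
  shows "norm (of_real u powr (-s) - of_real v powr (-s))
           \<le> norm s * (u powr (-\<sigma>) - v powr (-\<sigma>)) / \<sigma>"
proof -
  define F where "F = (\<lambda>t::real. (of_real t :: complex) powr (-s))"
  define F' where "F' = (\<lambda>t::real. - s * (of_real t :: complex) powr (-s - 1))"
  define G where "G = (\<lambda>t::real. - norm s * t powr (-\<sigma>) / \<sigma>)"
  define G' where "G' = (\<lambda>t::real. norm s * t powr (-\<sigma> - 1))"
  have F_deriv: "(F has_vector_derivative F' t) (at t within {u..v})" if "t \<in> {u..v}" for t
  proof -
    have "(of_real t :: complex) \<notin> \<real>\<^sub>\<le>\<^sub>0"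
      using that assms(1) by (auto simp: complex_nonpos_Reals_iff)
    from has_field_derivative_powr[OF this, of "-s"] show ?thesis
      unfolding F_def F'_def
      by (intro has_vector_derivative_real_field) (simp add: algebra_simps)
  qed
  have G_deriv: "(G has_vector_derivative G' t) (at t within {u..v})" if "t \<in> {u..v}" for t
  proof -
    have "t > 0" using that assms(1) by auto
    from has_real_derivative_powr[OF this, of "-\<sigma>"]
    have "(G has_real_derivative (- norm s * (-\<sigma> * t powr (-\<sigma> - 1)) / \<sigma>)) (at t)"
      unfolding G_def by (intro DERIV_cdivide DERIV_cmult) auto
    then show ?thesis
      using assms(3) unfolding G'_def
      by (simp add: has_real_derivative_iff_has_vector_derivative has_vector_derivative_at_within)
  qed
  have F_int: "(F' has_integral (F v - F u)) {u..v}"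
    by (rule fundamental_theorem_of_calculus[OF assms(2) F_deriv])
  have G_int: "(G' has_integral (G v - G u)) {u..v}"
    by (rule fundamental_theorem_of_calculus[OF assms(2) G_deriv])
  have "norm (F' t) \<le> G' t" if "t \<in> {u..v}" for t
  proof -
    have "t \<ge> 1" using that assms(1) by auto
    then have "norm (F' t) = norm s * t powr (- Re s - 1)"
      unfolding F'_def by (simp add: norm_mult norm_powr_real_powr)
    also have "\<dots> \<le> G' t"
      unfolding G'_def using \<open>t \<ge> 1\<close> assms(4) by (intro mult_left_mono powr_mono) auto
    finally show ?thesis .
  qed
  then have "norm (integral {u..v} F') \<le> integral {u..v} G'"
    using F_int G_int by (intro integral_norm_bound_integral) auto
  then have "norm (F v - F u) \<le> G v - G u"
    using F_int G_int by (simp add: integral_unique)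
  then show ?thesis
    unfolding F_def G_def using assms(3) by (simp add: norm_minus_commute field_simps)
qed

lemma norm_Ln_one_minus_plus_le:
  fixes x :: complex
  assumes "norm x \<le> 3/4"
  shows "norm (- Ln (1 - x) - x) \<le> 4 * norm x ^ 2"
proof -
  have "norm (Ln (1 + (-x)) - (-x)) \<le> norm (-x) ^ 2 / (1 - norm (-x))"
    by (rule Ln_approx_linear) (use assms in auto)
  also have "\<dots> = norm x ^ 2 / (1 - norm x)" by simp
  also have "\<dots> \<le> norm x ^ 2 / (1/4)"
    using assms by (intro divide_left_mono) auto
  finally show ?thesis by (simp add: norm_minus_commute algebra_simps)
qed

lemma two_powr_minus_half_le: "(2::real) powr (-(1/2)) \<le> 3/4"
proof -
  have "4/3 \<le> sqrt (2::real)" by (rule real_le_rsqrt) (simp add: power2_eq_square)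
  have "(2::real) powr (-(1/2)) = inverse (sqrt 2)"
    by (subst powr_minus) (subst powr_half_sqrt, auto)
  also have "\<dots> \<le> inverse (4/3)"
    using \<open>4/3 \<le> sqrt 2\<close> by (intro le_imp_inverse_le) auto
  finally show ?thesis by simp
qed

lemma summable_powr_minus_if_ge_Suc:
  fixes h :: "nat \<Rightarrow> real"
  assumes "\<And>n. real n + 1 \<le> h n" "p > 1"
  shows "summable (\<lambda>n. h n powr (-p))"
proof (rule summable_comparison_test'[where N=0])
  show "summable (\<lambda>n. real (Suc n) powr (-p))"
    using assms(2) summable_Suc_iff[of "\<lambda>n. real n powr (-p)"]
    by (simp add: summable_real_powr_iff)
  show "norm (h n powr (-p)) \<le> real (Suc n) powr (-p)" for n
    using assms(1)[of n] assms(2) by (auto intro!: powr_mono2')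
qed

lemma strict_mono_int_seq_ge:
  fixes a :: "nat \<Rightarrow> int"
  assumes "2 \<le> a 1" "\<And>n. n \<ge> 1 \<Longrightarrow> a n < a (Suc n)"
  shows "int n + 2 \<le> a (Suc n)"
proof (induction n)
  case (Suc n)
  then show ?case using assms(2)[of "Suc n"] by simp
qed (use assms(1) in simp)

locale eventually_alternating_euler_product =
  fixes c b :: "nat \<Rightarrow> real" and N :: nat
  assumes abs_c_le_1: "\<bar>c n\<bar> \<le> 1"
    and b_ge: "real n + 2 \<le> b n"
    and b_mono: "b n \<le> b (Suc n)"
    and c_alternating: "N \<le> k \<Longrightarrow> c (2*k+1) = - c (2*k)"
begin

definition euler_term :: "complex \<Rightarrow> nat \<Rightarrow> complex" where
  "euler_term s n = of_real (c n) * of_real (b n) powr (-s)"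

definition log_factor :: "complex \<Rightarrow> nat \<Rightarrow> complex" where
  "log_factor s n = - Ln (1 - euler_term s n)"

definition log_factor_pair :: "complex \<Rightarrow> nat \<Rightarrow> complex" where
  "log_factor_pair s k = log_factor s (2*k) + log_factor s (2*k+1)"

definition log_zeta :: "complex \<Rightarrow> complex" where
  "log_zeta s = (\<Sum>k. log_factor_pair s k)"

lemma b_ge_1: "1 \<le> b n"
  using b_ge[of n] by simp

lemma powr_b_antimono:
  assumes "m \<le> n" "0 \<le> \<sigma>"
  shows "b n powr (-\<sigma>) \<le> b m powr (-\<sigma>)"
proof -
  have "b m \<le> b n" using assms(1) by (rule lift_Suc_mono_le[of b, OF b_mono])
  then show ?thesis using b_ge_1[of m] assms(2) by (intro powr_mono2') auto
qed

lemma summable_b_powr: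
  assumes "p > 1"
  shows "summable (\<lambda>n. b n powr (-p))"
proof (rule summable_powr_minus_if_ge_Suc[OF _ assms])
  show "real n + 1 \<le> b n" for n using b_ge[of n] by simp
qed

lemma summable_b_powr_pairs:
  assumes "p > 1"
  shows "summable (\<lambda>k. b (2*k) powr (-p) + b (2*k+1) powr (-p))"
proof (intro summable_add summable_powr_minus_if_ge_Suc[OF _ assms])
  show "real k + 1 \<le> b (2*k)" "real k + 1 \<le> b (2*k+1)" for k
    using b_ge[of "2*k"] b_ge[of "2*k+1"] by simp_all
qed

lemma summable_b_powr_pair_diff:
  assumes "0 < \<sigma>"
  shows "summable (\<lambda>k. b (2*k) powr (-\<sigma>) - b (2*k+1) powr (-\<sigma>))"
proof (rule summable_comparison_test'[where N=0])
  have "real k \<le> b (2*k)" for k using b_ge[of "2*k"] by simp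
  then have "filterlim (\<lambda>k. b (2*k)) at_top sequentially"
    by (intro filterlim_at_top_mono[OF filterlim_real_sequentially] always_eventually allI)
  then have "(\<lambda>k. b (2*k) powr (-\<sigma>)) \<longlonglongrightarrow> 0"
    by (rule tendsto_neg_powr[rotated]) (use assms in simp)
  then show "summable (\<lambda>k. b (2*k) powr (-\<sigma>) - b (2*Suc k) powr (-\<sigma>))"
    by (rule telescope_summable')
  show "norm (b (2*k) powr (-\<sigma>) - b (2*k+1) powr (-\<sigma>))
          \<le> b (2*k) powr (-\<sigma>) - b (2*Suc k) powr (-\<sigma>)" for k
    using powr_b_antimono[of "2*k" "2*k+1" \<sigma>] powr_b_antimono[of "2*k+1" "2*Suc k" \<sigma>] assms
    by simp
qed

lemma norm_euler_term_le:
  assumes "\<sigma> \<le> Re s"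
  shows "norm (euler_term s n) \<le> b n powr (-\<sigma>)"
proof -
  have "norm (euler_term s n) = \<bar>c n\<bar> * b n powr (- Re s)"
    using b_ge_1[of n] by (simp add: euler_term_def norm_mult norm_powr_real_powr)
  also have "\<dots> \<le> 1 * b n powr (-\<sigma>)"
    using abs_c_le_1 b_ge_1 assms by (intro mult_mono powr_mono) auto
  finally show ?thesis by simp
qed

lemma norm_euler_term_le_3_4:
  assumes "1/2 \<le> Re s"
  shows "norm (euler_term s n) \<le> 3/4"
proof -
  have "norm (euler_term s n) \<le> b n powr (-(1/2))"
    using assms by (rule norm_euler_term_le)
  also have "\<dots> \<le> 2 powr (-(1/2))"
    using b_ge[of n] by (intro powr_mono2') auto
  finally show ?thesis using two_powr_minus_half_le by linarith
qed

lemma Re_one_minus_euler_term_pos: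
  assumes "1/2 \<le> Re s"
  shows "0 < Re (1 - euler_term s n)"
  using complex_Re_le_cmod[of "euler_term s n"] norm_euler_term_le_3_4[OF assms, of n] by simp

lemma norm_log_factor_minus_euler_term_le:
  assumes "1/2 \<le> Re s" "\<sigma> \<le> Re s"
  shows "norm (log_factor s n - euler_term s n) \<le> 4 * b n powr (-(2*\<sigma>))"
proof -
  have "norm (log_factor s n - euler_term s n) \<le> 4 * norm (euler_term s n) ^ 2"
    unfolding log_factor_def by (rule norm_Ln_one_minus_plus_le[OF norm_euler_term_le_3_4[OF assms(1)]])
  also have "\<dots> \<le> 4 * (b n powr (-\<sigma>)) ^ 2"
    using norm_euler_term_le[OF assms(2)] by (intro mult_left_mono power_mono) auto
  also have "(b n powr (-\<sigma>)) ^ 2 = b n powr (-(2*\<sigma>))"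
    by (simp add: power2_eq_square powr_add[symmetric])
  finally show ?thesis .
qed

lemma holomorphic_log_factor: "(\<lambda>s. log_factor s n) holomorphic_on {s. Re s > 1/2}"
proof -
  have "1 - euler_term s n \<notin> \<real>\<^sub>\<le>\<^sub>0" if "s \<in> {s. Re s > 1/2}" for s
    using Re_one_minus_euler_term_pos[of s n] that by (auto simp: complex_nonpos_Reals_iff)
  moreover have "of_real (b n) \<noteq> (0 :: complex)" using b_ge_1[of n] by simp
  ultimately show ?thesis
    unfolding log_factor_def euler_term_def by (intro holomorphic_intros) auto
qed

lemma norm_log_factor_pair_le:
  assumes "N \<le> k" "0 < \<sigma>" "1/2 \<le> Re s" "\<sigma> \<le> Re s"
  shows "norm (log_factor_pair s k)
           \<le> norm s * (b (2*k) powr (-\<sigma>) - b (2*k+1) powr (-\<sigma>)) / \<sigma>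
             + 4 * (b (2*k) powr (-(2*\<sigma>)) + b (2*k+1) powr (-(2*\<sigma>)))"
proof -
  have "euler_term s (2*k) + euler_term s (2*k+1)
          = of_real (c (2*k)) * (of_real (b (2*k)) powr (-s) - of_real (b (2*k+1)) powr (-s))"
    using c_alternating[OF assms(1)] by (simp add: euler_term_def algebra_simps)
  then have "norm (euler_term s (2*k) + euler_term s (2*k+1))
               \<le> norm (of_real (b (2*k)) powr (-s) - of_real (b (2*k+1)) powr (-s))"
    using abs_c_le_1[of "2*k"] by (simp add: norm_mult mult_left_le_one_le)
  also have "\<dots> \<le> norm s * (b (2*k) powr (-\<sigma>) - b (2*k+1) powr (-\<sigma>)) / \<sigma>"
    using b_mono[of "2*k"] by (intro norm_powr_diff_le[OF b_ge_1 _ assms(2,4)]) simp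
  finally have linear: "norm (euler_term s (2*k) + euler_term s (2*k+1))
                          \<le> norm s * (b (2*k) powr (-\<sigma>) - b (2*k+1) powr (-\<sigma>)) / \<sigma>" .
  let ?rem = "\<lambda>n. log_factor s n - euler_term s n"
  have split: "log_factor_pair s k
      = (euler_term s (2*k) + euler_term s (2*k+1)) + (?rem (2*k) + ?rem (2*k+1))"
    unfolding log_factor_pair_def by simp
  have "norm (log_factor_pair s k)
          \<le> norm (euler_term s (2*k) + euler_term s (2*k+1)) + (norm (?rem (2*k)) + norm (?rem (2*k+1)))"
    unfolding split by (rule order.trans[OF norm_triangle_ineq add_left_mono[OF norm_triangle_ineq]])
  then show ?thesis
    using linear norm_log_factor_minus_euler_term_le[OF assms(3,4), of "2*k"]
      norm_log_factor_minus_euler_term_le[OF assms(3,4), of "2*k+1"]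
    unfolding distrib_left by linarith
qed

lemma uniform_limit_log_zeta:
  assumes "1/2 < \<sigma>"
  shows "uniform_limit {s. \<sigma> \<le> Re s \<and> norm s \<le> R}
           (\<lambda>n s. \<Sum>k<n. log_factor_pair s k) log_zeta sequentially"
proof -
  define M where "M k = R * (b (2*k) powr (-\<sigma>) - b (2*k+1) powr (-\<sigma>)) / \<sigma>
                   + 4 * (b (2*k) powr (-(2*\<sigma>)) + b (2*k+1) powr (-(2*\<sigma>)))" for k
  have "summable M"
    unfolding M_def using assms
    by (intro summable_add summable_divide summable_mult summable_b_powr_pair_diff
        summable_b_powr_pairs) auto
  moreover have "\<forall>\<^sub>F k in sequentially. \<forall>s\<in>{s. \<sigma> \<le> Re s \<and> norm s \<le> R}.
                    norm (log_factor_pair s k) \<le> M k"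
  proof (rule eventually_sequentiallyI[of N], safe)
    fix k s assume "N \<le> k" "\<sigma> \<le> Re s" "norm s \<le> R"
    have "0 \<le> b (2*k) powr (-\<sigma>) - b (2*k+1) powr (-\<sigma>)"
      using powr_b_antimono[of "2*k" "2*k+1" \<sigma>] assms by simp
    then have "norm s * (b (2*k) powr (-\<sigma>) - b (2*k+1) powr (-\<sigma>)) / \<sigma>
                 \<le> R * (b (2*k) powr (-\<sigma>) - b (2*k+1) powr (-\<sigma>)) / \<sigma>"
      using \<open>norm s \<le> R\<close> assms by (intro divide_right_mono mult_right_mono) auto
    then show "norm (log_factor_pair s k) \<le> M k"
      using norm_log_factor_pair_le[of k \<sigma> s] \<open>N \<le> k\<close> \<open>\<sigma> \<le> Re s\<close> assms
      unfolding M_def by linarith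
  qed
  ultimately show ?thesis
    unfolding log_zeta_def by (intro Weierstrass_m_test_ev[where f="\<lambda>k s. log_factor_pair s k"])
qed

lemma holomorphic_log_zeta: "log_zeta holomorphic_on {s. Re s > 1/2}"
proof (rule holomorphic_uniform_sequence[where f="\<lambda>n s. \<Sum>k<n. log_factor_pair s k"])
  show "open {s. Re s > 1/2}" by (rule open_halfspace_Re_gt)
  show "(\<lambda>s. \<Sum>k<n. log_factor_pair s k) holomorphic_on {s. Re s > 1/2}" for n
    unfolding log_factor_pair_def by (intro holomorphic_intros holomorphic_log_factor)
next
  fix z assume "z \<in> {s. Re s > 1/2}"
  define d where "d = (Re z - 1/2) / 2"
  have "d > 0" using \<open>z \<in> _\<close> by (simp add: d_def)
  have ball_sub: "cball z d \<subseteq> {s. 1/2 + d \<le> Re s \<and> norm s \<le> norm z + d}"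
  proof safe
    fix s assume "s \<in> cball z d"
    then have "norm (z - s) \<le> d" by (simp add: dist_norm)
    moreover have "\<bar>Re (z - s)\<bar> \<le> norm (z - s)" by (rule abs_Re_le_cmod)
    moreover have "norm s \<le> norm z + norm (z - s)"
      using norm_triangle_sub[of s z] by (simp add: norm_minus_commute)
    ultimately have "Re z - Re s \<le> d" and norm_s: "norm s \<le> norm z + d"
      by (auto simp: abs_le_iff)
    then show "1/2 + d \<le> Re s" using d_def by argo
    show "norm s \<le> norm z + d" by (rule norm_s)
  qed
  then have "cball z d \<subseteq> {s. Re s > 1/2}" using \<open>d > 0\<close> by force
  moreover have "uniform_limit (cball z d) (\<lambda>n s. \<Sum>k<n. log_factor_pair s k) log_zeta sequentially"
    using uniform_limit_log_zeta[of "1/2 + d" "norm z + d"] \<open>d > 0\<close> ball_sub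
    by (auto intro: uniform_limit_on_subset)
  ultimately show "\<exists>d>0. cball z d \<subseteq> {s. Re s > 1/2}
                    \<and> uniform_limit (cball z d) (\<lambda>n s. \<Sum>k<n. log_factor_pair s k) log_zeta sequentially"
    using \<open>d > 0\<close> by blast
qed

lemma log_factor_sums_log_zeta:
  assumes "1 < Re s"
  shows "log_factor s sums log_zeta s"
proof -
  have half: "1/2 \<le> Re s" using assms by simp
  have "summable (\<lambda>n. b n powr (- Re s) + 4 * b n powr (-(2 * Re s)))"
    using assms by (intro summable_add summable_mult summable_b_powr) auto
  moreover have "norm (norm (log_factor s n)) \<le> b n powr (- Re s) + 4 * b n powr (-(2 * Re s))" for n
    using norm_triangle_sub[of "log_factor s n" "euler_term s n"] norm_euler_term_le[of "Re s" s n]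
      norm_log_factor_minus_euler_term_le[OF half order_refl, of n]
    by simp
  ultimately have "summable (\<lambda>n. norm (log_factor s n))"
    by (rule summable_comparison_test'[where N=0])
  then have sums: "log_factor s sums suminf (log_factor s)"
    by (rule summable_sums[OF summable_norm_cancel])
  have "(\<lambda>k. log_factor s (Suc (k * 2)) + log_factor s (k * 2)) sums suminf (log_factor s)"
    using sums_group[OF sums, of 2] by (simp add: atLeastLessThanSuc)
  then have "(\<lambda>k. log_factor_pair s k) sums suminf (log_factor s)"
    unfolding log_factor_pair_def by (simp add: mult.commute add.commute)
  then show ?thesis using sums by (simp add: log_zeta_def sums_iff)
qed

lemma euler_product_has_prod_exp_log_zeta:
  assumes "1 < Re s"
  shows "(\<lambda>n. 1 / (1 - of_real (c n) * of_real (b n) powr (-s))) has_prod exp (log_zeta s)"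
proof -
  have "exp (log_factor s n) = 1 / (1 - of_real (c n) * of_real (b n) powr (-s))" for n
  proof -
    have "1 - euler_term s n \<noteq> 0"
      using Re_one_minus_euler_term_pos[of s n] assms by auto
    then show ?thesis by (simp add: log_factor_def euler_term_def exp_minus divide_inverse)
  qed
  then show ?thesis
    using sums_imp_has_prod_exp[OF log_factor_sums_log_zeta[OF assms]] by (simp add: has_prod_def)
qed

theorem euler_product_continuation:
  "\<exists>f. f holomorphic_on {s. Re s > 1/2} \<and> (\<forall>s. Re s > 1/2 \<longrightarrow> f s \<noteq> 0)
     \<and> (\<forall>s. Re s > 1 \<longrightarrow> (\<lambda>n. 1 / (1 - of_real (c n) * of_real (b n) powr (-s))) has_prod f s)"
  using holomorphic_log_zeta euler_product_has_prod_exp_log_zeta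
  by (intro exI[of _ "\<lambda>s. exp (log_zeta s)"]) (auto intro!: holomorphic_intros)

end

theorem proposition2p1:
  fixes N :: nat and l :: "nat \<Rightarrow> real" and a :: "nat \<Rightarrow> int" and \<epsilon> :: real
  assumes "N \<ge> 1"
    and "\<forall>n\<ge>1. -1 \<le> l n \<and> l n \<le> 1"
    and "\<epsilon> \<in> {1, -1}"
    and "\<forall>n\<ge>N. l n = \<epsilon> * (-1) ^ n"
    and "2 \<le> a 1"
    and "\<forall>n\<ge>1. a n < a (Suc n)"
  shows "\<exists>f :: complex \<Rightarrow> complex.
           f holomorphic_on {s. Re s > 1/2}
         \<and> (\<forall>s. Re s > 1/2 \<longrightarrow> f s \<noteq> 0)
         \<and> (\<forall>s. Re s > 1 \<longrightarrow>
              (\<lambda>n. 1 / (1 - complex_of_real (l (Suc n)) * of_int (a (Suc n)) powr (- s))) has_prod f s)"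
proof -
  interpret eventually_alternating_euler_product "\<lambda>n. l (Suc n)" "\<lambda>n. of_int (a (Suc n))" N
  proof
    show "\<bar>l (Suc n)\<bar> \<le> 1" for n using assms(2)[rule_format, of "Suc n"] by auto
    show "real n + 2 \<le> of_int (a (Suc n))" for n
      using strict_mono_int_seq_ge[of a n] assms(5,6) by simp
    show "real_of_int (a (Suc n)) \<le> of_int (a (Suc (Suc n)))" for n
      using assms(6) by (simp add: order_less_imp_le)
    show "l (Suc (2*k+1)) = - l (Suc (2*k))" if "N \<le> k" for k
      using assms(4) that by simp
  qed
  show ?thesis using euler_product_continuation by simp
qed

end
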